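(* Asymptotically almost surely, for all $0\le j<i\le i_{\max}$ and all $v\in V\cap\mathcal L_i$, $$|\Theta_{i,j}(v)|\le 4\max\bigl(8R,\ \mathbb E|\Theta_{i,j}((t_i,0))|\bigr),$$ where $\mathbb E|\Theta_{i,j}((t_i,0))|$ denotes the expected number of points of $V$ in $\mathcal L_j\cap S(-2\theta_{i,j},2\theta_{i,j})$.
   Context: Model $\mathrm{Poi}_{\alpha,\nu}(n)$: fix $\alpha>1$, $\nu>0$, $R=2\log(n/\nu)$. Points are in polar coordinates $(r,\theta)$ of the native representation of the hyperbolic plane, with $\cosh d_h(u,u')=\cosh r_u\cosh r_{u'}-\sinh r_u\sinh r_{u'}\cos(\theta_u-\theta_{u'})$. $V$ is a Poisson point process on $\{r<R\}$ with intensity $\nu e^{R/2}\frac{1}{2\pi}\frac{\alpha\sinh(\alpha r)}{\cosh(\alpha R)-1}\,dr\,d\theta$. For a point $v$ write $t_v=R-r_v$ and identify $v$ with $(t_v,\theta_v)$. Angles are modulo $2\pi$. For $t_1,t_2\in[0,R/2]$, $\theta^R(t_1,t_2)=\arccos\bigl(\frac{\cosh(R-t_1)\cosh(R-t_2)-\cosh R}{\sinh(R-t_1)\sinh(R-t_2)}\bigr)$. Sectors: $S(\theta_1,\theta_2)=\{(t,\theta):0\le t<R,\ \theta_1\le\theta<\theta_2\}$; annuli $\mathcal L(t^-,t^+)=\{(t,\theta):t^-\le t<t^+\}$. Layers: $t_{-1}=0$, $t_i=(\frac{4\alpha}{\alpha-1}+3i)\log R$ ($i\ge0$); $t_{\max}=R/(2\alpha)$;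 $i_{\max}=\min\{i\ge0:t_i\ge t_{\max}\}$; $\theta_{i,j}=\theta^R(t_i,t_j)$; $\mathcal L_i=\mathcal L(t_{i-1},t_i)$. For a point $p$ and $0\le j<i\le i_{\max}$, $\Theta_{i,j}(p)=V\cap\mathcal L_j\cap S(\theta_p-2\theta_{i,j},\theta_p+2\theta_{i,j})$. *)

theory Defs
  imports "HOL-Probability.Probability"
begin

text \<open>Model Poi_{alpha,nu}(n). Points are pairs (r, theta) in native polar coordinates,
  with theta taken in [0, 2 pi). The coordinate t of a point is R - r.\<close>

definition Rn :: "real \<Rightarrow> nat \<Rightarrow> real" where
  "Rn \<nu> n = 2 * ln (real n / \<nu>)"

definition hyp_domain :: "real \<Rightarrow> (real \<times> real) set" where
  "hyp_domain R = {(r, \<theta>). 0 \<le> r \<and> r < R \<and> 0 \<le> \<theta> \<and> \<theta> < 2 * pi}"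

definition poi_intensity :: "real \<Rightarrow> real \<Rightarrow> real \<Rightarrow> real \<Rightarrow> real" where
  "poi_intensity \<alpha> \<nu> R r =
     \<nu> * exp (R / 2) * (1 / (2 * pi)) * (\<alpha> * sinh (\<alpha> * r) / (cosh (\<alpha> * R) - 1))"

definition intensity_measure :: "real \<Rightarrow> real \<Rightarrow> nat \<Rightarrow> (real \<times> real) measure" where
  "intensity_measure \<alpha> \<nu> n =
     density lborel (\<lambda>p. ennreal (indicator (hyp_domain (Rn \<nu> n)) p * poi_intensity \<alpha> \<nu> (Rn \<nu> n) (fst p)))"

definition poisson_pp ::
  "'w measure \<Rightarrow> (real \<times> real) set \<Rightarrow> (real \<times> real) measure \<Rightarrow> ('w \<Rightarrow> (real \<times> real) set) \<Rightarrow> bool" where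
  "poisson_pp M D \<mu> V \<longleftrightarrow>
     prob_space M \<and>
     (\<forall>\<omega>\<in>space M. finite (V \<omega>) \<and> V \<omega> \<subseteq> D) \<and>
     (\<forall>(A :: nat \<Rightarrow> (real \<times> real) set) I. finite I \<longrightarrow> disjoint_family_on A I \<longrightarrow>
        (\<forall>i\<in>I. A i \<in> sets borel) \<longrightarrow>
        prob_space.indep_vars M (\<lambda>_. count_space UNIV) (\<lambda>i \<omega>. card (V \<omega> \<inter> A i)) I) \<and>
     (\<forall>A \<in> sets borel. \<forall>k::nat.
        measure M {\<omega> \<in> space M. card (V \<omega> \<inter> A) = k}
          = exp (- measure \<mu> A) * measure \<mu> A ^ k / fact k)"

definition thetaR :: "real \<Rightarrow> real \<Rightarrow> real \<Rightarrow> real" where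
  "thetaR R t1 t2 = arccos ((cosh (R - t1) * cosh (R - t2) - cosh R) / (sinh (R - t1) * sinh (R - t2)))"

definition t_layer :: "real \<Rightarrow> real \<Rightarrow> nat \<Rightarrow> real" where
  "t_layer \<alpha> R i = (4 * \<alpha> / (\<alpha> - 1) + 3 * real i) * ln R"

text \<open>Lower boundary of layer L_i, i.e. t_{i-1} with t_{-1} = 0.\<close>
definition t_lower :: "real \<Rightarrow> real \<Rightarrow> nat \<Rightarrow> real" where
  "t_lower \<alpha> R i = (if i = 0 then 0 else t_layer \<alpha> R (i - 1))"

definition i_max :: "real \<Rightarrow> real \<Rightarrow> nat" where
  "i_max \<alpha> R = (LEAST i. t_layer \<alpha> R i \<ge> R / (2 * \<alpha>))"

definition theta_ij :: "real \<Rightarrow> real \<Rightarrow> nat \<Rightarrow> nat \<Rightarrow> real" where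
  "theta_ij \<alpha> R i j = thetaR R (t_layer \<alpha> R i) (t_layer \<alpha> R j)"

definition annulus :: "real \<Rightarrow> real \<Rightarrow> real \<Rightarrow> (real \<times> real) set" where
  "annulus R tm tp = {(r, \<theta>). tm \<le> R - r \<and> R - r < tp}"

definition layer :: "real \<Rightarrow> real \<Rightarrow> nat \<Rightarrow> (real \<times> real) set" where
  "layer \<alpha> R i = annulus R (t_lower \<alpha> R i) (t_layer \<alpha> R i)"

definition sector :: "real \<Rightarrow> real \<Rightarrow> real \<Rightarrow> (real \<times> real) set" where
  "sector R \<theta>1 \<theta>2 = {(r, \<theta>). 0 \<le> R - r \<and> R - r < R \<and>
      (\<exists>k::int. \<theta>1 \<le> \<theta> + 2 * pi * of_int k \<and> \<theta> + 2 * pi * of_int k < \<theta>2)}"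

definition Theta_set :: "real \<Rightarrow> real \<Rightarrow> (real \<times> real) set \<Rightarrow> nat \<Rightarrow> nat \<Rightarrow> real \<times> real \<Rightarrow> (real \<times> real) set" where
  "Theta_set \<alpha> R Vs i j p =
     Vs \<inter> layer \<alpha> R j \<inter> sector R (snd p - 2 * theta_ij \<alpha> R i j) (snd p + 2 * theta_ij \<alpha> R i j)"

end

theory Submission
  imports Defs "HOL-Real_Asymp.Real_Asymp"
begin

text \<open>Fix layers \<open>j < i\<close> and write \<open>\<theta> = \<theta>_{i,j}\<close>, \<open>w = exp (- R)\<close>. Every sector
  \<open>S(\<phi> - 2\<theta>, \<phi> + 2\<theta>)\<close> lies in one of the \<open>O(exp R)\<close> sectors \<open>S(kw, kw + 4\<theta> + w)\<close> with
  \<open>0 \<le> k \<le> \<lceil>2\<pi>/w\<rceil>\<close>, so it suffices to control the counts of \<open>V\<close> in these finitely many fixed sets.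
  The intensity density is \<open>O(exp (R/2))\<close>, so widening the angular range by \<open>w\<close> adds at most
  \<open>O(R exp (- R/2)) \<le> 1\<close> to the mean: the count of \<open>V\<close> in \<open>L_j \<inter> S(kw, kw + 4\<theta> + w)\<close> is Poisson
  with mean at most \<open>m + 1\<close>, where \<open>m = max (8R) (E |\<Theta>_{i,j}|)\<close>. A Poisson variable of mean \<open>\<lambda>\<close>
  exceeds \<open>x\<close> with probability at most \<open>exp \<lambda> / 2^x\<close>, which for \<open>x = 4m\<close> is at most \<open>e exp (- 8R)\<close>.
  A union bound over the \<open>O(R^2 exp R)\<close> triples \<open>(i, j, k)\<close> leaves a failure probability
  \<open>O(R^2 exp (- 7R)) \<rightarrow> 0\<close>.\<close>

section \<open>Poisson point processes\<close>

lemma poisson_pp_prob_space: "poisson_pp M D \<mu> V \<Longrightarrow> prob_space M"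
  unfolding poisson_pp_def by (elim conjE)

lemma poisson_pp_finite: "poisson_pp M D \<mu> V \<Longrightarrow> \<omega> \<in> space M \<Longrightarrow> finite (V \<omega>)"
  unfolding poisson_pp_def by blast

lemma poisson_pp_count_measurable:
  assumes "poisson_pp M D \<mu> V" "A \<in> sets borel"
  shows "(\<lambda>\<omega>. card (V \<omega> \<inter> A)) \<in> M \<rightarrow>\<^sub>M count_space UNIV"
proof -
  have "\<forall>(A :: nat \<Rightarrow> (real \<times> real) set) I. finite I \<longrightarrow> disjoint_family_on A I \<longrightarrow>
      (\<forall>i\<in>I. A i \<in> sets borel) \<longrightarrow>
      prob_space.indep_vars M (\<lambda>_. count_space UNIV) (\<lambda>i \<omega>. card (V \<omega> \<inter> A i)) I"
    using assms(1) unfolding poisson_pp_def by (elim conjE)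
  from this[rule_format, of "{0::nat}" "\<lambda>_. A"] assms(2)
  have "prob_space.indep_vars M (\<lambda>_. count_space UNIV) (\<lambda>i \<omega>. card (V \<omega> \<inter> A)) {0::nat}"
    by (simp add: disjoint_family_on_def)
  then show ?thesis
    unfolding prob_space.indep_vars_def2[OF poisson_pp_prob_space[OF assms(1)]] by simp
qed

lemma poisson_pp_count_eq:
  assumes "poisson_pp M D \<mu> V" "A \<in> sets borel"
  shows "measure M {\<omega> \<in> space M. card (V \<omega> \<inter> A) = k}
          = exp (- measure \<mu> A) * measure \<mu> A ^ k / fact k"
  using assms unfolding poisson_pp_def by blast

lemma poisson_pp_count_event:
  assumes "poisson_pp M D \<mu> V" "A \<in> sets borel"
  shows "{\<omega> \<in> space M. P (card (V \<omega> \<inter> A))} \<in> sets M"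
proof -
  have "{\<omega> \<in> space M. P (card (V \<omega> \<inter> A))} = (\<lambda>\<omega>. card (V \<omega> \<inter> A)) -` {k. P k} \<inter> space M"
    by auto
  also have "\<dots> \<in> sets M"
    using poisson_pp_count_measurable[OF assms] by (rule measurable_sets) auto
  finally show ?thesis .
qed

lemma poisson_pp_count_less:
  assumes "poisson_pp M D \<mu> V" "A \<in> sets borel"
  shows "measure M {\<omega> \<in> space M. card (V \<omega> \<inter> A) < m}
          = (\<Sum>k<m. exp (- measure \<mu> A) * measure \<mu> A ^ k / fact k)"
proof (induction m)
  case 0
  then show ?case by simp
next
  case (Suc m)
  interpret prob_space M using poisson_pp_prob_space[OF assms(1)] .
  have "{\<omega> \<in> space M. card (V \<omega> \<inter> A) < Suc m}
      = {\<omega> \<in> space M. card (V \<omega> \<inter> A) < m} \<union> {\<omega> \<in> space M. card (V \<omega> \<inter> A) = m}"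
    by auto
  then have "measure M {\<omega> \<in> space M. card (V \<omega> \<inter> A) < Suc m}
      = measure M {\<omega> \<in> space M. card (V \<omega> \<inter> A) < m} + measure M {\<omega> \<in> space M. card (V \<omega> \<inter> A) = m}"
    using finite_measure_Union[OF poisson_pp_count_event[OF assms, of "\<lambda>k. k < m"]
        poisson_pp_count_event[OF assms, of "\<lambda>k. k = m"]] by auto
  then show ?case using Suc poisson_pp_count_eq[OF assms] by simp
qed

text \<open>Each tail term satisfies \<open>l^k / k! \<le> (2l)^k / k! / 2^m\<close> for \<open>k \<ge> m\<close>.\<close>

lemma exp_minus_partial_sum_le:
  fixes l :: real
  assumes "l \<ge> 0"
  shows "exp l - (\<Sum>k<m. l ^ k / fact k) \<le> exp (2 * l) / 2 ^ m"
proof -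
  have exp_sums: "(\<lambda>k. x ^ k / fact k) sums exp x" for x :: real
    using exp_converges[of x] by (simp add: divide_inverse mult.commute)
  have tail_sums: "(\<lambda>j. x ^ (j + m) / fact (j + m)) sums (exp x - (\<Sum>k<m. x ^ k / fact k))"
    for x :: real
    using sums_split_initial_segment[OF exp_sums[of x], of m] by simp
  have term_le: "l ^ (j + m) / fact (j + m) \<le> (2 * l) ^ (j + m) / fact (j + m) / 2 ^ m" for j
  proof -
    have "(2 * l) ^ (j + m) / fact (j + m) / 2 ^ m = l ^ (j + m) * 2 ^ j / fact (j + m)"
      by (simp add: power_mult_distrib power_add)
    moreover have "l ^ (j + m) \<le> l ^ (j + m) * 2 ^ j"
      using assms by (simp add: mult_le_cancel_left1)
    ultimately show ?thesis
      by (simp add: divide_right_mono)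
  qed
  have "exp l - (\<Sum>k<m. l ^ k / fact k) \<le> (exp (2 * l) - (\<Sum>k<m. (2 * l) ^ k / fact k)) / 2 ^ m"
    using sums_le[OF term_le tail_sums sums_divide[OF tail_sums[of "2 * l"], of "2 ^ m"]] .
  also have "\<dots> \<le> exp (2 * l) / 2 ^ m"
    using assms by (intro divide_right_mono) (auto intro!: sum_nonneg)
  finally show ?thesis .
qed

lemma poisson_pp_count_tail:
  assumes "poisson_pp M D \<mu> V" "A \<in> sets borel" "x \<ge> 0"
  shows "measure M {\<omega> \<in> space M. real (card (V \<omega> \<inter> A)) > x} \<le> exp (measure \<mu> A) / 2 powr x"
proof -
  interpret prob_space M using poisson_pp_prob_space[OF assms(1)] .
  define l where "l = measure \<mu> A"
  define m where "m = nat \<lfloor>x\<rfloor> + 1"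
  have mx: "real m > x"
    unfolding m_def using assms(3) by linarith
  have "{\<omega> \<in> space M. real (card (V \<omega> \<inter> A)) > x} = space M - {\<omega> \<in> space M. card (V \<omega> \<inter> A) < m}"
  proof (intro set_eqI iffI)
    fix \<omega> assume "\<omega> \<in> {\<omega> \<in> space M. real (card (V \<omega> \<inter> A)) > x}"
    then show "\<omega> \<in> space M - {\<omega> \<in> space M. card (V \<omega> \<inter> A) < m}"
      unfolding m_def using assms(3) by auto linarith
  next
    fix \<omega> assume "\<omega> \<in> space M - {\<omega> \<in> space M. card (V \<omega> \<inter> A) < m}"
    then show "\<omega> \<in> {\<omega> \<in> space M. real (card (V \<omega> \<inter> A)) > x}"
      using mx by (auto simp flip: of_nat_le_iff)
  qed
  then have "measure M {\<omega> \<in> space M. real (card (V \<omega> \<inter> A)) > x}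
      = 1 - (\<Sum>k<m. exp (- l) * l ^ k / fact k)"
    using prob_compl[OF poisson_pp_count_event[OF assms(1,2), of "\<lambda>k. k < m"]]
      poisson_pp_count_less[OF assms(1,2)] l_def by simp
  also have "\<dots> = exp (- l) * (exp l - (\<Sum>k<m. l ^ k / fact k))"
    by (simp add: algebra_simps exp_minus_inverse sum_distrib_left)
  also have "\<dots> \<le> exp (- l) * (exp (2 * l) / 2 ^ m)"
    by (intro mult_left_mono exp_minus_partial_sum_le) (auto simp: l_def)
  also have "\<dots> = exp l / 2 powr real m"
    by (simp add: exp_add[symmetric] powr_realpow)
  also have "\<dots> \<le> exp l / 2 powr x"
    using mx by (intro divide_left_mono) auto
  finally show ?thesis unfolding l_def .
qed

lemma poisson_mean_sums:
  fixes l :: real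
  shows "(\<lambda>k. real k * (exp (- l) * l ^ k / fact k)) sums l"
proof -
  have "(\<lambda>k. (exp (- l) * l) * (l ^ k / fact k)) sums ((exp (- l) * l) * exp l)"
    using exp_converges[of l] by (intro sums_mult) (simp add: divide_inverse mult.commute)
  moreover have "(exp (- l) * l) * exp l = l"
    by (simp add: exp_minus field_simps)
  moreover have "(\<lambda>k. real (Suc k) * (exp (- l) * l ^ Suc k / fact (Suc k)))
      = (\<lambda>k. (exp (- l) * l) * (l ^ k / fact k))"
    by (simp del: of_nat_Suc add: field_simps fun_eq_iff)
  ultimately have "(\<lambda>k. real (Suc k) * (exp (- l) * l ^ Suc k / fact (Suc k))) sums l"
    by simp
  then show ?thesis
    using sums_Suc_iff[of "\<lambda>k. real k * (exp (- l) * l ^ k / fact k)"] by simp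
qed

lemma poisson_pp_expectation:
  assumes pp: "poisson_pp M D \<mu> V" and A: "A \<in> sets borel"
  shows "prob_space.expectation M (\<lambda>\<omega>. real (card (V \<omega> \<inter> A))) = measure \<mu> A"
proof -
  interpret prob_space M using poisson_pp_prob_space[OF pp] .
  define X where "X = (\<lambda>\<omega>. card (V \<omega> \<inter> A))"
  define l where "l = measure \<mu> A"
  have level_sets: "{\<omega> \<in> space M. X \<omega> = k} \<in> sets M" for k
    unfolding X_def by (rule poisson_pp_count_event[OF pp A])
  have X_as_sum: "ennreal (real (X \<omega>)) = (\<Sum>k. ennreal (real k) * indicator {\<omega> \<in> space M. X \<omega> = k} \<omega>)"
    if "\<omega> \<in> space M" for \<omega>
  proof -
    have "(\<Sum>k. ennreal (real k) * indicator {\<omega> \<in> space M. X \<omega> = k} \<omega>)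
        = (\<Sum>k\<in>{X \<omega>}. ennreal (real k) * indicator {\<omega> \<in> space M. X \<omega> = k} \<omega>)"
      by (rule suminf_finite) (auto simp: indicator_def)
    then show ?thesis using that by (simp add: indicator_def)
  qed
  have level_prob: "ennreal (real k) * emeasure M {\<omega> \<in> space M. X \<omega> = k}
      = ennreal (real k * (exp (- l) * l ^ k / fact k))" for k
    using emeasure_eq_measure[of "{\<omega> \<in> space M. X \<omega> = k}"] poisson_pp_count_eq[OF pp A, of k]
    unfolding X_def l_def by (simp add: ennreal_mult'[symmetric])
  have "(\<integral>\<^sup>+ \<omega>. ennreal (real (X \<omega>)) \<partial>M)
      = (\<integral>\<^sup>+ \<omega>. (\<Sum>k. ennreal (real k) * indicator {\<omega> \<in> space M. X \<omega> = k} \<omega>) \<partial>M)"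
    by (rule nn_integral_cong) (simp add: X_as_sum)
  also have "\<dots> = (\<Sum>k. ennreal (real k) * emeasure M {\<omega> \<in> space M. X \<omega> = k})"
    using level_sets by (simp add: nn_integral_suminf nn_integral_cmult_indicator)
  also have "\<dots> = ennreal l"
    unfolding level_prob by (rule suminf_ennreal_eq[OF _ poisson_mean_sums]) (simp add: l_def)
  finally have "(\<integral>\<^sup>+ \<omega>. ennreal (real (X \<omega>)) \<partial>M) = ennreal l" .
  moreover have "(\<lambda>\<omega>. real (X \<omega>)) \<in> borel_measurable M"
    using poisson_pp_count_measurable[OF pp A] unfolding X_def by (rule measurable_compose) simp
  ultimately show ?thesis
    using nn_integral_eq_integrable[of "\<lambda>\<omega>. real (X \<omega>)" M l] unfolding X_def l_def by simp
qed

section \<open>Angular arcs\<close>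

definition angle_arc :: "real \<Rightarrow> real \<Rightarrow> real set" where
  "angle_arc a b = {\<theta>. 0 \<le> \<theta> \<and> \<theta> < 2 * pi \<and> (\<exists>k::int. a \<le> \<theta> + 2 * pi * of_int k \<and> \<theta> + 2 * pi * of_int k < b)}"

lemma angle_arc_borel: "angle_arc a b \<in> sets borel"
proof -
  have "angle_arc a b = {x \<in> space borel. 0 \<le> x \<and> x < 2 * pi \<and>
      (\<exists>k::int. a \<le> x + 2 * pi * of_int k \<and> x + 2 * pi * of_int k < b)}"
    unfolding angle_arc_def by auto
  also have "\<dots> \<in> sets borel" by measurable
  finally show ?thesis .
qed

lemma angle_arc_empty: "b \<le> a \<Longrightarrow> angle_arc a b = {}"
  unfolding angle_arc_def by auto

lemma angle_reduce_bounds: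
  shows "0 \<le> a - 2 * pi * of_int \<lfloor>a / (2 * pi)\<rfloor>" and "a - 2 * pi * of_int \<lfloor>a / (2 * pi)\<rfloor> < 2 * pi"
proof -
  have "2 * pi * of_int \<lfloor>a / (2 * pi)\<rfloor> \<le> 2 * pi * (a / (2 * pi))"
    by (intro mult_left_mono) auto
  moreover have "2 * pi * (a / (2 * pi)) < 2 * pi * (of_int \<lfloor>a / (2 * pi)\<rfloor> + 1)"
    by (intro mult_strict_left_mono) auto
  ultimately show "0 \<le> a - 2 * pi * of_int \<lfloor>a / (2 * pi)\<rfloor>" "a - 2 * pi * of_int \<lfloor>a / (2 * pi)\<rfloor> < 2 * pi"
    by (simp_all add: algebra_simps)
qed

lemma angle_arc_full:
  assumes "b - a \<ge> 2 * pi"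
  shows "angle_arc a b = {0..<2 * pi}"
proof (intro set_eqI iffI)
  fix \<theta>
  assume \<theta>: "\<theta> \<in> {0..<2 * pi}"
  define k where "k = - \<lfloor>(\<theta> - a) / (2 * pi)\<rfloor>"
  have "\<theta> + 2 * pi * of_int k = a + ((\<theta> - a) - 2 * pi * of_int \<lfloor>(\<theta> - a) / (2 * pi)\<rfloor>)"
    unfolding k_def by simp
  then have "a \<le> \<theta> + 2 * pi * of_int k" "\<theta> + 2 * pi * of_int k < a + 2 * pi"
    using angle_reduce_bounds[of "\<theta> - a"] by linarith+
  then show "\<theta> \<in> angle_arc a b"
    unfolding angle_arc_def using \<theta> assms by auto
qed (auto simp: angle_arc_def)

lemma angle_arc_split:
  assumes "a \<le> b" "b - a < 2 * pi"
  defines "a' \<equiv> a - 2 * pi * of_int \<lfloor>a / (2 * pi)\<rfloor>"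
  shows "angle_arc a b = {a'..<min (a' + (b - a)) (2 * pi)} \<union> {0..<a' + (b - a) - 2 * pi}"
proof -
  define m where "m = \<lfloor>a / (2 * pi)\<rfloor>"
  have am: "a = a' + 2 * pi * of_int m"
    unfolding a'_def m_def by simp
  have a': "0 \<le> a'" "a' < 2 * pi"
    unfolding a'_def by (rule angle_reduce_bounds)+
  have shift: "2 * pi * of_int (k - m) = 2 * pi * of_int k - 2 * pi * of_int m" for k :: int
    by (simp add: algebra_simps)
  show ?thesis
  proof (intro set_eqI iffI)
    fix \<theta>
    assume "\<theta> \<in> angle_arc a b"
    then obtain k :: int where \<theta>: "0 \<le> \<theta>" "\<theta> < 2 * pi"
      "a \<le> \<theta> + 2 * pi * of_int k" "\<theta> + 2 * pi * of_int k < b"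
      unfolding angle_arc_def by auto
    have j: "a' \<le> \<theta> + 2 * pi * of_int (k - m)" "\<theta> + 2 * pi * of_int (k - m) < a' + (b - a)"
      using \<theta> am shift[of k] by linarith+
    then have "0 < 2 * pi * (of_int (k - m) + 1)" "0 < 2 * pi * (2 - of_int (k - m))"
      using \<theta> a' assms(2) by (simp_all add: algebra_simps)
    then have "of_int (- 1) < (of_int (k - m) :: real)" "(of_int (k - m) :: real) < of_int 2"
      by (simp_all add: zero_less_mult_iff)
    then have "k - m = 0 \<or> k - m = 1"
      unfolding of_int_less_iff by linarith
    then have "real_of_int k - of_int m = 0 \<or> real_of_int k - of_int m = 1"
      by (metis of_int_0 of_int_1 of_int_diff)
    then show "\<theta> \<in> {a'..<min (a' + (b - a)) (2 * pi)} \<union> {0..<a' + (b - a) - 2 * pi}"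
      using j \<theta> by auto
  next
    fix \<theta>
    assume "\<theta> \<in> {a'..<min (a' + (b - a)) (2 * pi)} \<union> {0..<a' + (b - a) - 2 * pi}"
    then consider "a' \<le> \<theta>" "\<theta> < a' + (b - a)" "\<theta> < 2 * pi" | "0 \<le> \<theta>" "\<theta> < a' + (b - a) - 2 * pi"
      by auto
    then show "\<theta> \<in> angle_arc a b"
    proof cases
      case 1
      then show ?thesis unfolding angle_arc_def using a'
        by (intro CollectI conjI exI[of _ m]) (use am in linarith)+
    next
      case 2
      have "2 * pi * of_int (m + 1) = 2 * pi * of_int m + 2 * pi"
        by (simp add: algebra_simps)
      then show ?thesis unfolding angle_arc_def using 2 a' assms
        by (intro CollectI conjI exI[of _ "m + 1"]) (use am in linarith)+
    qed
  qed
qed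

lemma emeasure_angle_arc:
  assumes "a \<le> b"
  shows "emeasure lborel (angle_arc a b) = ennreal (min (b - a) (2 * pi))"
proof (cases "b - a \<ge> 2 * pi")
  case True
  then show ?thesis using angle_arc_full[OF True] by simp
next
  case False
  define a' where "a' = a - 2 * pi * of_int \<lfloor>a / (2 * pi)\<rfloor>"
  have a': "0 \<le> a'" "a' < 2 * pi"
    unfolding a'_def by (rule angle_reduce_bounds)+
  note split = angle_arc_split[OF assms, folded a'_def]
  show ?thesis
  proof (cases "a' + (b - a) \<le> 2 * pi")
    case True
    then have "angle_arc a b = {a'..<a' + (b - a)}"
      using False split by auto
    then show ?thesis using assms False by simp
  next
    case wraps: False
    then have "angle_arc a b = {a'..<2 * pi} \<union> {0..<a' + (b - a) - 2 * pi}"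
      using False split by auto
    moreover have "emeasure lborel ({a'..<2 * pi} \<union> {0..<a' + (b - a) - 2 * pi})
        = emeasure lborel {a'..<2 * pi} + emeasure lborel {0..<a' + (b - a) - 2 * pi}"
      by (rule plus_emeasure[symmetric]) (use False in auto)
    moreover have "ennreal (2 * pi - a') + ennreal (a' + (b - a) - 2 * pi) = ennreal (b - a)"
      using a' wraps by (subst ennreal_plus[symmetric]) auto
    ultimately show ?thesis
      using a' wraps False by simp
  qed
qed

lemma measure_angle_arc: "a \<le> b \<Longrightarrow> measure lborel (angle_arc a b) = min (b - a) (2 * pi)"
  using emeasure_angle_arc[of a b] by (simp add: measure_def)

lemma measure_angle_arc_widen_le:
  assumes "w \<ge> 0"
  shows "measure lborel (angle_arc c (c + 4 * \<theta> + w)) \<le> measure lborel (angle_arc (- 2 * \<theta>) (2 * \<theta>)) + w"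
proof (cases "\<theta> \<ge> 0")
  case True
  then show ?thesis
    using assms by (simp add: measure_angle_arc)
next
  case False
  then have "measure lborel (angle_arc (- 2 * \<theta>) (2 * \<theta>)) = 0"
    by (simp add: angle_arc_empty)
  moreover have "measure lborel (angle_arc c (c + 4 * \<theta> + w)) \<le> w"
    using False assms
    by (cases "c \<le> c + 4 * \<theta> + w") (simp_all add: measure_angle_arc angle_arc_empty)
  ultimately show ?thesis by linarith
qed

section \<open>The intensity measure on annular sectors\<close>

lemma sets_borel_real_pair: "sets (borel \<Otimes>\<^sub>M borel) = sets (borel :: (real \<times> real) measure)"
  by (simp only: borel_prod)

lemma sector_borel: "sector R a b \<in> sets borel"
proof -
  have "sector R a b = {p \<in> space (borel \<Otimes>\<^sub>M borel). 0 \<le> R - fst p \<and> R - fst p < R \<and>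
      (\<exists>k::int. a \<le> snd p + 2 * pi * of_int k \<and> snd p + 2 * pi * of_int k < b)}"
    unfolding sector_def by (auto simp: space_pair_measure)
  also have "\<dots> \<in> sets (borel \<Otimes>\<^sub>M borel)" by measurable
  finally show ?thesis by (simp only: sets_borel_real_pair)
qed

lemma annulus_borel: "annulus R t1 t2 \<in> sets borel"
proof -
  have "annulus R t1 t2 = {p \<in> space (borel \<Otimes>\<^sub>M borel). t1 \<le> R - fst p \<and> R - fst p < t2}"
    unfolding annulus_def by (auto simp: space_pair_measure)
  also have "\<dots> \<in> sets (borel \<Otimes>\<^sub>M borel)" by measurable
  finally show ?thesis by (simp only: sets_borel_real_pair)
qed

lemma hyp_domain_borel: "hyp_domain R \<in> sets borel"
proof -
  have "hyp_domain R = {p \<in> space (borel \<Otimes>\<^sub>M borel). 0 \<le> fst p \<and> fst p < R \<and> 0 \<le> snd p \<and> snd p < 2 * pi}"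
    unfolding hyp_domain_def by (auto simp: space_pair_measure)
  also have "\<dots> \<in> sets (borel \<Otimes>\<^sub>M borel)" by measurable
  finally show ?thesis by (simp only: sets_borel_real_pair)
qed

lemma layer_sector_borel: "layer \<alpha> R j \<inter> sector R a b \<in> sets borel"
  unfolding layer_def using annulus_borel sector_borel by blast

text \<open>The strict bound \<open>0 < r\<close> reflects that \<open>sector\<close> excludes the origin.\<close>

definition radial_band :: "real \<Rightarrow> real \<Rightarrow> real \<Rightarrow> real set" where
  "radial_band R t1 t2 = {r. 0 < r \<and> r < R \<and> t1 \<le> R - r \<and> R - r < t2}"

definition radial_mass :: "real \<Rightarrow> real \<Rightarrow> real \<Rightarrow> real \<Rightarrow> real \<Rightarrow> real" where
  "radial_mass \<alpha> \<nu> R t1 t2 =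
     enn2real (\<integral>\<^sup>+ r. ennreal (indicator (radial_band R t1 t2) r * poi_intensity \<alpha> \<nu> R r) \<partial>lborel)"

lemma radial_band_borel: "radial_band R t1 t2 \<in> sets borel"
proof -
  have "radial_band R t1 t2 = {x \<in> space borel. 0 < x \<and> x < R \<and> t1 \<le> R - x \<and> R - x < t2}"
    unfolding radial_band_def by auto
  also have "\<dots> \<in> sets borel" by measurable
  finally show ?thesis .
qed

lemma poi_intensity_measurable: "poi_intensity \<alpha> \<nu> R \<in> borel_measurable borel"
proof -
  have "poi_intensity \<alpha> \<nu> R
      = (\<lambda>r. (\<nu> * exp (R / 2) * (1 / (2 * pi)) * \<alpha> / (cosh (\<alpha> * R) - 1)) * sinh (\<alpha> * r))"
    unfolding poi_intensity_def by (simp add: fun_eq_iff)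
  also have "\<dots> \<in> borel_measurable borel"
    by (intro borel_measurable_continuous_onI continuous_intros)
  finally show ?thesis .
qed

lemma intensity_density_measurable:
  "(\<lambda>p. ennreal (indicator (hyp_domain R) p * poi_intensity \<alpha> \<nu> R (fst p))) \<in> borel_measurable borel"
proof -
  have "hyp_domain R \<in> sets (borel \<Otimes>\<^sub>M borel)"
    using hyp_domain_borel sets_borel_real_pair by simp
  then have "(\<lambda>p. ennreal (indicator (hyp_domain R) p * poi_intensity \<alpha> \<nu> R (fst p)))
      \<in> borel_measurable (borel \<Otimes>\<^sub>M borel)"
    using poi_intensity_measurable by measurable
  then show ?thesis by (simp cong: measurable_cong_sets add: sets_borel_real_pair)
qed

text \<open>The density depends on the radius only, so by Tonelli the intensity of an annular sector
  factorises into a radial integral and the length of the angular arc.\<close>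

lemma emeasure_intensity_annulus_sector:
  "emeasure (intensity_measure \<alpha> \<nu> n) (annulus (Rn \<nu> n) t1 t2 \<inter> sector (Rn \<nu> n) a b)
   = (\<integral>\<^sup>+ r. ennreal (indicator (radial_band (Rn \<nu> n) t1 t2) r * poi_intensity \<alpha> \<nu> (Rn \<nu> n) r) \<partial>lborel)
     * emeasure lborel (angle_arc a b)"
proof -
  define R where "R = Rn \<nu> n"
  define f where "f = poi_intensity \<alpha> \<nu> R"
  define X where "X = annulus R t1 t2 \<inter> sector R a b"
  define h where "h = (\<lambda>p::real \<times> real.
    ennreal (indicator (radial_band R t1 t2) (fst p) * f (fst p)) * indicator (angle_arc a b) (snd p))"
  have X_borel: "X \<in> sets borel"
    unfolding X_def using annulus_borel sector_borel by blast
  have support: "p \<in> hyp_domain R \<inter> X \<longleftrightarrow> fst p \<in> radial_band R t1 t2 \<and> snd p \<in> angle_arc a b" for p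
    unfolding hyp_domain_def X_def annulus_def sector_def radial_band_def angle_arc_def
    by (cases p) auto
  have integrand: "ennreal (indicator (hyp_domain R) p * f (fst p)) * indicator X p = h p" for p
    using support[of p] unfolding h_def by (cases "p \<in> hyp_domain R \<inter> X") (auto simp: indicator_def)
  have "h \<in> borel_measurable (borel \<Otimes>\<^sub>M borel)"
    unfolding h_def f_def using radial_band_borel angle_arc_borel poi_intensity_measurable
    by measurable
  then have h_measurable: "h \<in> borel_measurable (lborel \<Otimes>\<^sub>M lborel)"
    by (simp add: measurable_lborel1 cong: measurable_cong_sets)
  have "emeasure (intensity_measure \<alpha> \<nu> n) X
      = (\<integral>\<^sup>+ p. ennreal (indicator (hyp_domain R) p * f (fst p)) * indicator X p \<partial>lborel)"
    unfolding intensity_measure_def R_def f_def using X_borel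
    by (subst emeasure_density) (auto simp: R_def intensity_density_measurable)
  also have "\<dots> = (\<integral>\<^sup>+ p. h p \<partial>(lborel \<Otimes>\<^sub>M lborel))"
    by (simp add: integrand lborel_prod)
  also have "\<dots> = (\<integral>\<^sup>+ r. \<integral>\<^sup>+ \<theta>. h (r, \<theta>) \<partial>lborel \<partial>lborel)"
    by (rule lborel.nn_integral_fst[symmetric, OF h_measurable])
  also have "\<dots> = (\<integral>\<^sup>+ r. ennreal (indicator (radial_band R t1 t2) r * f r) * emeasure lborel (angle_arc a b) \<partial>lborel)"
    using angle_arc_borel unfolding h_def by (simp add: nn_integral_cmult_indicator)
  also have "\<dots> = (\<integral>\<^sup>+ r. ennreal (indicator (radial_band R t1 t2) r * f r) \<partial>lborel) * emeasure lborel (angle_arc a b)"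
    by (rule nn_integral_multc)
      (use radial_band_borel poi_intensity_measurable in \<open>unfold f_def; measurable\<close>)
  finally show ?thesis unfolding X_def R_def f_def .
qed

lemma measure_intensity_annulus_sector:
  "measure (intensity_measure \<alpha> \<nu> n) (annulus (Rn \<nu> n) t1 t2 \<inter> sector (Rn \<nu> n) a b)
   = radial_mass \<alpha> \<nu> (Rn \<nu> n) t1 t2 * measure lborel (angle_arc a b)"
  unfolding measure_def emeasure_intensity_annulus_sector radial_mass_def by (simp add: enn2real_mult)

lemma sinh_le_two_cosh_minus_one:
  fixes x :: real
  assumes "4 \<le> exp x"
  shows "sinh x \<le> 2 * (cosh x - 1)"
proof -
  have "2 * (cosh x - 1) - sinh x = exp x / 2 + 3 * exp (- x) / 2 - 2"
    unfolding cosh_def sinh_def by (simp add: field_simps)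
  moreover have "exp (- x) > 0" by simp
  ultimately show ?thesis using assms by linarith
qed

lemma poi_intensity_le:
  assumes "\<alpha> > 1" "\<nu> > 0" "R \<ge> 2" "0 \<le> r" "r \<le> R"
  shows "poi_intensity \<alpha> \<nu> R r \<le> \<nu> * exp (R / 2) * \<alpha> / pi"
proof -
  have "2 \<le> \<alpha> * R"
    using mult_mono[of 1 \<alpha> 2 R] assms by simp
  moreover have "(4::real) \<le> exp 2"
    using exp_ge_add_one_self[of 1] mult_mono[of 2 "exp 1" 2 "exp 1 :: real"]
    by (simp add: exp_add[symmetric])
  ultimately have "4 \<le> exp (\<alpha> * R)"
    by (meson exp_le_cancel_iff order_trans)
  then have cosh_bound: "sinh (\<alpha> * R) \<le> 2 * (cosh (\<alpha> * R) - 1)"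
    by (rule sinh_le_two_cosh_minus_one)
  have "0 < sinh (\<alpha> * R)"
    using assms by simp
  then have "0 < cosh (\<alpha> * R) - 1"
    using cosh_bound by argo
  moreover have "sinh (\<alpha> * r) \<le> sinh (\<alpha> * R)"
    using assms by (simp add: mult_left_mono)
  then have "\<alpha> * sinh (\<alpha> * r) \<le> \<alpha> * 2 * (cosh (\<alpha> * R) - 1)"
    unfolding mult.assoc
    using assms by (intro mult_left_mono order_trans[OF _ cosh_bound]) auto
  ultimately have "\<alpha> * sinh (\<alpha> * r) / (cosh (\<alpha> * R) - 1) \<le> \<alpha> * 2"
    by (simp add: divide_le_eq)
  then have "poi_intensity \<alpha> \<nu> R r \<le> \<nu> * exp (R / 2) * (1 / (2 * pi)) * (\<alpha> * 2)"
    unfolding poi_intensity_def using assms by (intro mult_left_mono) auto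
  then show ?thesis by simp
qed

lemma radial_mass_nonneg: "radial_mass \<alpha> \<nu> R t1 t2 \<ge> 0"
  unfolding radial_mass_def by simp

lemma radial_mass_le:
  assumes "\<alpha> > 1" "\<nu> > 0" "R \<ge> 2"
  shows "radial_mass \<alpha> \<nu> R t1 t2 \<le> \<nu> * exp (R / 2) * \<alpha> / pi * R"
proof -
  define C where "C = \<nu> * exp (R / 2) * \<alpha> / pi"
  have "(\<integral>\<^sup>+ r. ennreal (indicator (radial_band R t1 t2) r * poi_intensity \<alpha> \<nu> R r) \<partial>lborel)
      \<le> (\<integral>\<^sup>+ r. ennreal C * indicator {0..R} r \<partial>lborel)"
    using poi_intensity_le[OF assms] unfolding C_def
    by (intro nn_integral_mono) (auto simp: indicator_def radial_band_def intro!: ennreal_leI)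
  also have "\<dots> = ennreal C * emeasure lborel {0..R}"
    by (rule nn_integral_cmult_indicator) simp
  also have "\<dots> = ennreal (C * R)"
    using assms by (simp add: C_def ennreal_mult[symmetric])
  finally show ?thesis
    unfolding radial_mass_def C_def using assms by (intro enn2real_leI) auto
qed

section \<open>Covering the sectors by a fixed grid\<close>

lemma sector_subset_grid_aligned:
  assumes "w > 0"
  obtains k :: int where "0 \<le> k" "k \<le> \<lceil>2 * pi / w\<rceil>"
    and "sector R (\<phi> - 2 * \<theta>) (\<phi> + 2 * \<theta>) \<subseteq> sector R (of_int k * w) (of_int k * w + 4 * \<theta> + w)"
proof -
  define a where "a = \<phi> - 2 * \<theta>"
  define f where "f = \<lfloor>a / (2 * pi)\<rfloor>"
  define a' where "a' = a - 2 * pi * of_int f"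
  define k where "k = \<lfloor>a' / w\<rfloor>"
  have a': "0 \<le> a'" "a' < 2 * pi"
    unfolding a'_def f_def by (rule angle_reduce_bounds)+
  have "of_int k * w \<le> (a' / w) * w" "(a' / w) * w < (of_int k + 1) * w"
    unfolding k_def using assms by (intro mult_right_mono mult_strict_right_mono; linarith)+
  then have kw: "of_int k * w \<le> a'" "a' < of_int k * w + w"
    using assms by (simp_all add: algebra_simps)
  show ?thesis
  proof
    show "0 \<le> k"
      unfolding k_def using a' assms by simp
    have "a' / w < 2 * pi / w"
      using a' assms by (simp add: divide_strict_right_mono)
    then show "k \<le> \<lceil>2 * pi / w\<rceil>"
      unfolding k_def by linarith
    show "sector R (\<phi> - 2 * \<theta>) (\<phi> + 2 * \<theta>) \<subseteq> sector R (of_int k * w) (of_int k * w + 4 * \<theta> + w)"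
    proof
      fix p
      assume "p \<in> sector R (\<phi> - 2 * \<theta>) (\<phi> + 2 * \<theta>)"
      then obtain r x m where p: "p = (r, x)" "0 \<le> R - r" "R - r < R"
        "\<phi> - 2 * \<theta> \<le> x + 2 * pi * of_int (m::int)" "x + 2 * pi * of_int m < \<phi> + 2 * \<theta>"
        unfolding sector_def by auto
      have "2 * pi * of_int (m - f) = 2 * pi * of_int m - 2 * pi * of_int f"
        by (simp add: algebra_simps)
      then have "of_int k * w \<le> x + 2 * pi * of_int (m - f)"
        "x + 2 * pi * of_int (m - f) < of_int k * w + 4 * \<theta> + w"
        using p(4,5) kw unfolding a'_def a_def by linarith+
      then show "p \<in> sector R (of_int k * w) (of_int k * w + 4 * \<theta> + w)"
        unfolding sector_def using p by blast
    qed
  qed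
qed

definition grid_sector :: "real \<Rightarrow> real \<Rightarrow> nat \<Rightarrow> nat \<Rightarrow> int \<Rightarrow> (real \<times> real) set" where
  "grid_sector \<alpha> R i j k = layer \<alpha> R j \<inter>
     sector R (of_int k * exp (- R)) (of_int k * exp (- R) + 4 * theta_ij \<alpha> R i j + exp (- R))"

definition grid_indices :: "real \<Rightarrow> int set" where
  "grid_indices R = {0..\<lceil>2 * pi * exp R\<rceil>}"

definition layer_pairs :: "real \<Rightarrow> real \<Rightarrow> (nat \<times> nat) set" where
  "layer_pairs \<alpha> R = Sigma {..i_max \<alpha> R} (\<lambda>i. {..<i})"

lemma grid_sector_borel: "grid_sector \<alpha> R i j k \<in> sets borel"
  unfolding grid_sector_def by (rule layer_sector_borel)

lemma Theta_set_subset_grid_sector: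
  "\<exists>k \<in> grid_indices R. Theta_set \<alpha> R Vs i j v \<subseteq> Vs \<inter> grid_sector \<alpha> R i j k"
proof -
  obtain k where k: "0 \<le> k" "k \<le> \<lceil>2 * pi / exp (- R)\<rceil>"
    and "sector R (snd v - 2 * theta_ij \<alpha> R i j) (snd v + 2 * theta_ij \<alpha> R i j)
      \<subseteq> sector R (of_int k * exp (- R)) (of_int k * exp (- R) + 4 * theta_ij \<alpha> R i j + exp (- R))"
    by (rule sector_subset_grid_aligned[of "exp (- R)" R "snd v" "theta_ij \<alpha> R i j"]) auto
  then have "Theta_set \<alpha> R Vs i j v \<subseteq> Vs \<inter> grid_sector \<alpha> R i j k"
    unfolding Theta_set_def grid_sector_def by blast
  moreover have "2 * pi / exp (- R) = 2 * pi * exp R"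
    by (simp add: exp_minus field_simps)
  then have "k \<in> grid_indices R"
    using k unfolding grid_indices_def by simp
  ultimately show ?thesis by blast
qed

lemma card_grid_indices_le: "real (card (grid_indices R)) \<le> 2 * pi * exp R + 2"
proof -
  have "0 < 2 * pi * exp R"
    by simp
  then have "0 \<le> \<lceil>2 * pi * exp R\<rceil>"
    unfolding zero_le_ceiling by linarith
  then have "real (card (grid_indices R)) = of_int \<lceil>2 * pi * exp R\<rceil> + 1"
    unfolding grid_indices_def by simp
  then show ?thesis
    using of_int_ceiling_le_add_one[of "2 * pi * exp R"] by linarith
qed

lemma i_max_le_ceiling:
  assumes "\<alpha> > 1" "R \<ge> 3"
  shows "i_max \<alpha> R \<le> nat \<lceil>R\<rceil>"
  unfolding i_max_def
proof (rule Least_le)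
  have "exp 1 \<le> R"
    using exp_le assms by linarith
  then have "1 \<le> ln R"
    using assms by (simp add: ln_ge_iff)
  moreover have "0 \<le> 4 * \<alpha> / (\<alpha> - 1)"
    using assms by simp
  ultimately have "4 * \<alpha> / (\<alpha> - 1) + 3 * real (nat \<lceil>R\<rceil>) \<le> t_layer \<alpha> R (nat \<lceil>R\<rceil>)"
    unfolding t_layer_def by (simp add: mult_le_cancel_left1)
  moreover have "R / (2 * \<alpha>) \<le> R"
    using assms by (simp add: divide_le_eq)
  ultimately show "R / (2 * \<alpha>) \<le> t_layer \<alpha> R (nat \<lceil>R\<rceil>)"
    using \<open>0 \<le> 4 * \<alpha> / (\<alpha> - 1)\<close> assms by linarith
qed

lemma card_layer_pairs_le:
  assumes "\<alpha> > 1" "R \<ge> 3"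
  shows "real (card (layer_pairs \<alpha> R)) \<le> (R + 2)\<^sup>2"
proof -
  define I where "I = i_max \<alpha> R"
  have "card (layer_pairs \<alpha> R) \<le> card ({..I} \<times> {..I})"
    unfolding layer_pairs_def I_def by (intro card_mono) auto
  also have "\<dots> = (I + 1) * (I + 1)"
    by (simp add: card_cartesian_product)
  finally have "real (card (layer_pairs \<alpha> R)) \<le> real (I + 1) * real (I + 1)"
    by (metis of_nat_le_iff of_nat_mult)
  moreover have "real I \<le> R + 1"
    using i_max_le_ceiling[OF assms] of_int_ceiling_le_add_one[of R] assms unfolding I_def by linarith
  then have "real (I + 1) * real (I + 1) \<le> (R + 2) * (R + 2)"
    by (intro mult_mono) auto
  ultimately show ?thesis
    by (simp add: power2_eq_square)
qed

section \<open>Probability of an overfull grid sector\<close>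

definition theta_bound ::
  "'w measure \<Rightarrow> ('w \<Rightarrow> (real \<times> real) set) \<Rightarrow> real \<Rightarrow> real \<Rightarrow> nat \<Rightarrow> nat \<Rightarrow> real" where
  "theta_bound M V \<alpha> R i j =
     4 * max (8 * R) (prob_space.expectation M
       (\<lambda>\<omega>. real (card (Theta_set \<alpha> R (V \<omega>) i j (R - t_layer \<alpha> R i, 0)))))"

definition overfull_event ::
  "'w measure \<Rightarrow> ('w \<Rightarrow> (real \<times> real) set) \<Rightarrow> real \<Rightarrow> real \<Rightarrow> 'w set" where
  "overfull_event M V \<alpha> R = {\<omega> \<in> space M. \<exists>(i, j) \<in> layer_pairs \<alpha> R. \<exists>k \<in> grid_indices R.
     theta_bound M V \<alpha> R i j < real (card (V \<omega> \<inter> grid_sector \<alpha> R i j k))}"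

lemma exp_div_two_powr_le:
  fixes x :: real
  assumes "x \<ge> 0"
  shows "exp (x + 1) / 2 powr (4 * x) \<le> exp 1 * exp (- x)"
proof -
  have "x * (2 / 3) \<le> x * ln 2"
    using ln2_ge_two_thirds assms by (intro mult_left_mono)
  then have "2 * x \<le> 4 * x * ln 2"
    using assms by linarith
  then have "exp (2 * x) \<le> 2 powr (4 * x)"
    by (simp add: powr_def mult.commute)
  then have "exp (x + 1) / 2 powr (4 * x) \<le> exp (x + 1) / exp (2 * x)"
    by (intro divide_left_mono) auto
  also have "\<dots> = exp 1 * exp (- x)"
    by (simp add: exp_diff[symmetric] exp_add[symmetric] algebra_simps)
  finally show ?thesis .
qed

lemma mean_grid_sector_le:
  "measure (intensity_measure \<alpha> \<nu> n) (grid_sector \<alpha> (Rn \<nu> n) i j k)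
   \<le> measure (intensity_measure \<alpha> \<nu> n)
        (layer \<alpha> (Rn \<nu> n) j \<inter> sector (Rn \<nu> n) (- 2 * theta_ij \<alpha> (Rn \<nu> n) i j) (2 * theta_ij \<alpha> (Rn \<nu> n) i j))
     + radial_mass \<alpha> \<nu> (Rn \<nu> n) (t_lower \<alpha> (Rn \<nu> n) j) (t_layer \<alpha> (Rn \<nu> n) j) * exp (- Rn \<nu> n)"
  (is "?lhs \<le> ?rhs")
proof -
  define R where "R = Rn \<nu> n"
  define \<theta> where "\<theta> = theta_ij \<alpha> R i j"
  define c where "c = of_int k * exp (- R)"
  define g where "g = radial_mass \<alpha> \<nu> R (t_lower \<alpha> R j) (t_layer \<alpha> R j)"
  have "?lhs = g * measure lborel (angle_arc c (c + 4 * \<theta> + exp (- R)))"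
    unfolding grid_sector_def layer_def measure_intensity_annulus_sector g_def c_def \<theta>_def R_def ..
  also have "\<dots> \<le> g * (measure lborel (angle_arc (- 2 * \<theta>) (2 * \<theta>)) + exp (- R))"
    using measure_angle_arc_widen_le[of "exp (- R)" c \<theta>] radial_mass_nonneg
    unfolding g_def by (intro mult_left_mono) auto
  also have "\<dots> = ?rhs"
    unfolding layer_def measure_intensity_annulus_sector g_def \<theta>_def R_def
    by (simp add: distrib_left)
  finally show ?thesis .
qed

text \<open>The hypothesis \<open>small\<close> says that widening the angular range by \<open>exp (- R)\<close> raises the mean
  by at most one.\<close>

lemma prob_grid_sector_overfull_le:
  assumes pp: "poisson_pp M (hyp_domain (Rn \<nu> n)) (intensity_measure \<alpha> \<nu> n) V"
    and "\<alpha> > 1" "\<nu> > 0" and R3: "Rn \<nu> n \<ge> 3"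
    and small: "\<nu> * exp (Rn \<nu> n / 2) * \<alpha> / pi * Rn \<nu> n * exp (- Rn \<nu> n) \<le> 1"
  shows "measure M {\<omega> \<in> space M. theta_bound M V \<alpha> (Rn \<nu> n) i j
            < real (card (V \<omega> \<inter> grid_sector \<alpha> (Rn \<nu> n) i j k))}
         \<le> exp 1 * exp (- 8 * Rn \<nu> n)"
proof -
  define R where "R = Rn \<nu> n"
  define \<mu> where "\<mu> = intensity_measure \<alpha> \<nu> n"
  define A0 where "A0 = layer \<alpha> R j \<inter> sector R (- 2 * theta_ij \<alpha> R i j) (2 * theta_ij \<alpha> R i j)"
  define m where "m = max (8 * R) (prob_space.expectation M
       (\<lambda>\<omega>. real (card (Theta_set \<alpha> R (V \<omega>) i j (R - t_layer \<alpha> R i, 0)))))"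
  have "Theta_set \<alpha> R Vs i j (R - t_layer \<alpha> R i, 0) = Vs \<inter> A0" for Vs
    unfolding Theta_set_def A0_def by auto
  then have "m = max (8 * R) (measure \<mu> A0)"
    unfolding m_def A0_def \<mu>_def R_def
    using poisson_pp_expectation[OF pp layer_sector_borel] by simp
  moreover have "radial_mass \<alpha> \<nu> R (t_lower \<alpha> R j) (t_layer \<alpha> R j) * exp (- R) \<le> 1"
    using radial_mass_le[of \<alpha> \<nu> R] assms small unfolding R_def
    by (smt (verit) exp_gt_zero mult_right_mono)
  ultimately have mean_le: "measure \<mu> (grid_sector \<alpha> R i j k) \<le> m + 1"
    using mean_grid_sector_le[of \<alpha> \<nu> n i j k] unfolding R_def \<mu>_def A0_def by linarith
  have m_ge: "8 * R \<le> m"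
    unfolding m_def by simp
  have "measure M {\<omega> \<in> space M. 4 * m < real (card (V \<omega> \<inter> grid_sector \<alpha> R i j k))}
      \<le> exp (measure \<mu> (grid_sector \<alpha> R i j k)) / 2 powr (4 * m)"
    using poisson_pp_count_tail[OF pp[folded \<mu>_def] _, of "grid_sector \<alpha> R i j k" "4 * m"] m_ge R3
    unfolding R_def by (simp add: grid_sector_borel)
  also have "\<dots> \<le> exp (m + 1) / 2 powr (4 * m)"
    using mean_le by (intro divide_right_mono) auto
  also have "\<dots> \<le> exp 1 * exp (- m)"
    using m_ge R3 unfolding R_def by (intro exp_div_two_powr_le) linarith
  also have "\<dots> \<le> exp 1 * exp (- 8 * R)"
    using m_ge by simp
  finally show ?thesis
    unfolding theta_bound_def m_def R_def .
qed

lemma overfull_event_eq_UN: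
  "overfull_event M V \<alpha> R = (\<Union>(i, j) \<in> layer_pairs \<alpha> R. \<Union>k \<in> grid_indices R.
     {\<omega> \<in> space M. theta_bound M V \<alpha> R i j < real (card (V \<omega> \<inter> grid_sector \<alpha> R i j k))})"
  unfolding overfull_event_def by auto

lemma finite_layer_pairs: "finite (layer_pairs \<alpha> R)"
  unfolding layer_pairs_def by auto

lemma finite_grid_indices: "finite (grid_indices R)"
  unfolding grid_indices_def by auto

lemma overfull_event_sets:
  assumes "poisson_pp M D \<mu> V"
  shows "overfull_event M V \<alpha> R \<in> sets M"
  unfolding overfull_event_eq_UN split_beta
  by (intro sets.finite_UN finite_layer_pairs finite_grid_indices
      poisson_pp_count_event[OF assms] grid_sector_borel)

lemma prob_overfull_event_le:
  assumes pp: "poisson_pp M (hyp_domain (Rn \<nu> n)) (intensity_measure \<alpha> \<nu> n) V"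
    and "\<alpha> > 1" "\<nu> > 0" "Rn \<nu> n \<ge> 3"
    and "\<nu> * exp (Rn \<nu> n / 2) * \<alpha> / pi * Rn \<nu> n * exp (- Rn \<nu> n) \<le> 1"
  shows "measure M (overfull_event M V \<alpha> (Rn \<nu> n))
         \<le> (Rn \<nu> n + 2)\<^sup>2 * (2 * pi * exp (Rn \<nu> n) + 2) * (exp 1 * exp (- 8 * Rn \<nu> n))"
proof -
  interpret prob_space M
    using poisson_pp_prob_space[OF pp] .
  define R where "R = Rn \<nu> n"
  define overfull where "overfull i j k = {\<omega> \<in> space M.
    theta_bound M V \<alpha> R i j < real (card (V \<omega> \<inter> grid_sector \<alpha> R i j k))}" for i j k
  define b where "b = exp 1 * exp (- 8 * R)"
  have overfull_sets: "overfull i j k \<in> events" for i j k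
    unfolding overfull_def by (intro poisson_pp_count_event[OF pp] grid_sector_borel)
  have "measure M (overfull_event M V \<alpha> R) \<le> (\<Sum>(i, j) \<in> layer_pairs \<alpha> R. measure M (\<Union>k \<in> grid_indices R. overfull i j k))"
    unfolding overfull_event_eq_UN overfull_def[symmetric] split_beta
    using finite_layer_pairs finite_grid_indices overfull_sets by (intro measure_UNION_le) auto
  also have "\<dots> \<le> (\<Sum>(i, j) \<in> layer_pairs \<alpha> R. \<Sum>k \<in> grid_indices R. measure M (overfull i j k))"
    using finite_grid_indices overfull_sets unfolding split_beta
    by (intro sum_mono measure_UNION_le) auto
  also have "\<dots> \<le> (\<Sum>(i, j) \<in> layer_pairs \<alpha> R. \<Sum>k \<in> grid_indices R. b)"
    using prob_grid_sector_overfull_le[OF assms] unfolding overfull_def b_def R_def split_beta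
    by (intro sum_mono) auto
  also have "\<dots> = real (card (layer_pairs \<alpha> R)) * real (card (grid_indices R)) * b"
    by (simp add: split_beta)
  also have "\<dots> \<le> (R + 2)\<^sup>2 * (2 * pi * exp R + 2) * b"
    using card_layer_pairs_le[of \<alpha> R] card_grid_indices_le[of R] assms unfolding R_def b_def
    by (intro mult_right_mono mult_mono) auto
  finally show ?thesis
    unfolding R_def b_def .
qed

lemma Theta_card_le_theta_bound:
  assumes "\<omega> \<in> space M - overfull_event M V \<alpha> R" "finite (V \<omega>)" "j < i" "i \<le> i_max \<alpha> R"
  shows "real (card (Theta_set \<alpha> R (V \<omega>) i j v)) \<le> theta_bound M V \<alpha> R i j"
proof -
  obtain k where k: "k \<in> grid_indices R" and sub: "Theta_set \<alpha> R (V \<omega>) i j v \<subseteq> V \<omega> \<inter> grid_sector \<alpha> R i j k"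
    using Theta_set_subset_grid_sector by blast
  have "card (Theta_set \<alpha> R (V \<omega>) i j v) \<le> card (V \<omega> \<inter> grid_sector \<alpha> R i j k)"
    using sub assms(2) by (intro card_mono) auto
  moreover have "(i, j) \<in> layer_pairs \<alpha> R"
    unfolding layer_pairs_def using assms(3,4) by auto
  then have "real (card (V \<omega> \<inter> grid_sector \<alpha> R i j k)) \<le> theta_bound M V \<alpha> R i j"
    using assms(1) k unfolding overfull_event_def by force
  ultimately show ?thesis
    by linarith
qed

section \<open>Asymptotics\<close>

lemma Rn_tendsto_at_top:
  assumes "\<nu> > 0"
  shows "filterlim (Rn \<nu>) at_top sequentially"
proof -
  have "filterlim (\<lambda>x::real. 2 * (ln x - ln \<nu>)) at_top at_top"
    by real_asymp
  moreover have "\<forall>\<^sub>F x in at_top. 2 * (ln x - ln \<nu>) = 2 * ln (x / \<nu>)"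
    using eventually_gt_at_top[of 0] by eventually_elim (use assms in \<open>simp add: ln_div\<close>)
  ultimately have "filterlim (\<lambda>x::real. 2 * ln (x / \<nu>)) at_top at_top"
    using filterlim_cong by fastforce
  from filterlim_compose[OF this filterlim_real_sequentially]
  show ?thesis
    unfolding Rn_def[abs_def] by simp
qed

lemma prob_overfull_event_tendsto_zero:
  assumes "\<alpha> > 1" "\<nu> > 0"
    and pp: "\<And>n. poisson_pp (M n) (hyp_domain (Rn \<nu> n)) (intensity_measure \<alpha> \<nu> n) (V n)"
  shows "(\<lambda>n. measure (M n) (overfull_event (M n) (V n) \<alpha> (Rn \<nu> n))) \<longlonglongrightarrow> 0"
proof -
  define bound where "bound R = (R + 2)\<^sup>2 * (2 * pi * exp R + 2) * (exp 1 * exp (- 8 * R))" for R :: real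
  have R_lim: "filterlim (Rn \<nu>) at_top sequentially"
    using Rn_tendsto_at_top[OF assms(2)] .
  have "(bound \<longlongrightarrow> 0) at_top"
    unfolding bound_def by real_asymp
  then have bound_lim: "((\<lambda>n. bound (Rn \<nu> n)) \<longlongrightarrow> 0) sequentially"
    using R_lim by (rule filterlim_compose)
  have "\<forall>\<^sub>F R in at_top. \<nu> * exp (R / 2) * \<alpha> / pi * R * exp (- R) \<le> 1"
    by real_asymp
  then have "\<forall>\<^sub>F R in at_top. (3::real) \<le> R \<and> \<nu> * exp (R / 2) * \<alpha> / pi * R * exp (- R) \<le> 1"
    by (intro eventually_conj eventually_ge_at_top)
  then have "\<forall>\<^sub>F n in sequentially. 3 \<le> Rn \<nu> n \<and> \<nu> * exp (Rn \<nu> n / 2) * \<alpha> / pi * Rn \<nu> n * exp (- Rn \<nu> n) \<le> 1"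
    using R_lim by (rule eventually_compose_filterlim)
  then have "\<forall>\<^sub>F n in sequentially. measure (M n) (overfull_event (M n) (V n) \<alpha> (Rn \<nu> n)) \<le> bound (Rn \<nu> n)"
    unfolding bound_def by eventually_elim (use prob_overfull_event_le[OF pp assms(1,2)] in blast)
  then show ?thesis
    by (intro real_tendsto_sandwich[OF _ _ tendsto_const bound_lim]) auto
qed

theorem lemma4p2:
  fixes \<alpha> \<nu> :: real
    and M :: "nat \<Rightarrow> 'w measure"
    and V :: "nat \<Rightarrow> 'w \<Rightarrow> (real \<times> real) set"
  assumes "\<alpha> > 1" and "\<nu> > 0"
    and "\<forall>n. poisson_pp (M n) (hyp_domain (Rn \<nu> n)) (intensity_measure \<alpha> \<nu> n) (V n)"
  shows "\<exists>E. (\<forall>n. E n \<in> sets (M n) \<and>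
              E n \<subseteq> {\<omega> \<in> space (M n).
                 \<forall>i j. j < i \<longrightarrow> i \<le> i_max \<alpha> (Rn \<nu> n) \<longrightarrow>
                   (\<forall>v \<in> V n \<omega> \<inter> layer \<alpha> (Rn \<nu> n) i.
                      real (card (Theta_set \<alpha> (Rn \<nu> n) (V n \<omega>) i j v))
                        \<le> 4 * max (8 * Rn \<nu> n)
                             (prob_space.expectation (M n)
                               (\<lambda>\<omega>'. real (card (Theta_set \<alpha> (Rn \<nu> n) (V n \<omega>') i j
                                   (Rn \<nu> n - t_layer \<alpha> (Rn \<nu> n) i, 0))))))})
           \<and> (\<lambda>n. measure (M n) (E n)) \<longlonglongrightarrow> 1"
proof -
  define E where "E n = space (M n) - overfull_event (M n) (V n) \<alpha> (Rn \<nu> n)" for n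
  have pp: "\<And>n. poisson_pp (M n) (hyp_domain (Rn \<nu> n)) (intensity_measure \<alpha> \<nu> n) (V n)"
    using assms(3) by blast
  have E_sets: "E n \<in> sets (M n)" for n
    unfolding E_def using overfull_event_sets[OF pp] by auto
  have E_good: "E n \<subseteq> {\<omega> \<in> space (M n). \<forall>i j. j < i \<longrightarrow> i \<le> i_max \<alpha> (Rn \<nu> n) \<longrightarrow>
      (\<forall>v \<in> V n \<omega> \<inter> layer \<alpha> (Rn \<nu> n) i.
         real (card (Theta_set \<alpha> (Rn \<nu> n) (V n \<omega>) i j v)) \<le> theta_bound (M n) (V n) \<alpha> (Rn \<nu> n) i j)}" for n
  proof (intro subsetI CollectI conjI allI impI ballI)
    fix \<omega> i j v
    assume "\<omega> \<in> E n" "j < i" "i \<le> i_max \<alpha> (Rn \<nu> n)"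
    then show "real (card (Theta_set \<alpha> (Rn \<nu> n) (V n \<omega>) i j v)) \<le> theta_bound (M n) (V n) \<alpha> (Rn \<nu> n) i j"
      unfolding E_def by (intro Theta_card_le_theta_bound poisson_pp_finite[OF pp]) auto
  qed (simp add: E_def)
  have "measure (M n) (E n) = 1 - measure (M n) (overfull_event (M n) (V n) \<alpha> (Rn \<nu> n))" for n
    unfolding E_def by (rule prob_space.prob_compl[OF poisson_pp_prob_space[OF pp] overfull_event_sets[OF pp]])
  then have "(\<lambda>n. measure (M n) (E n)) \<longlonglongrightarrow> 1"
    using tendsto_diff[OF tendsto_const prob_overfull_event_tendsto_zero[OF assms(1,2) pp], of 1] by simp
  with E_sets E_good show ?thesis
    unfolding theta_bound_def by (intro exI[of _ E] conjI allI)
qed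

end
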